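(* Suppose that, after a permutation of its columns, $A=[A^{(1)},\dots,A^{(k)}]$ where each $A^{(i)}\in\mathbb{R}^{n\times m_i}$ is a submatrix of $A$ and $\mathrm{New}(A^{(1)}),\dots,\mathrm{New}(A^{(k)})$ are mutually disjoint faces of $\mathrm{New}(A)$. Then (with coordinates of $\mathbb{R}^m$ grouped accordingly) $C_{\mathrm{NNS}}(A)=C_{\mathrm{NNS}}(A^{(1)})\times\cdots\times C_{\mathrm{NNS}}(A^{(k)})$ and $C_{\mathrm{SAGE}}(A)=C_{\mathrm{SAGE}}(A^{(1)})\times\cdots\times C_{\mathrm{SAGE}}(A^{(k)})$.
   Context: Let $A\in\mathbb{R}^{n\times m}$ have distinct columns $a_1,\dots,a_m$. For $c\in\mathbb{R}^m$, $\mathrm{Sig}(A,c)$ denotes the function $x\mapsto\sum_{i=1}^m c_i\exp(a_i^\top x)$ on $\mathbb{R}^n$. $\mathrm{New}(A)=\mathrm{conv}\{a_1,\dots,a_m\}$ is the Newton polytope. $C_{\mathrm{NNS}}(A)=\{c\in\mathbb{R}^m:\mathrm{Sig}(A,c)(x)\ge 0\ \forall x\in\mathbb{R}^n\}$. For $k\in[m]$, the $k$-th AGE cone is $C_{\mathrm{AGE}}(A,k)=\{c\in C_{\mathrm{NNS}}(A): c_i\ge 0\ \forall i\ne k\}$, and the SAGE cone is the Minkowski sum $C_{\mathrm{SAGE}}(A)=\sum_{k=1}^m C_{\mathrm{AGE}}(A,k)$. These definitions apply equally to any submatrix of $A$. *)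

theory Defs
  imports "HOL-Analysis.Analysis" "HOL-Library.FuncSet"
begin

text \<open>Exponent matrix A is given by its columns a i (i in a finite index set S);
  coefficient vectors in R^S are extensional functions on S.\<close>

definition Sig :: "('i \<Rightarrow> real^'n) \<Rightarrow> 'i set \<Rightarrow> ('i \<Rightarrow> real) \<Rightarrow> real^'n \<Rightarrow> real" where
  "Sig a S c x = (\<Sum>i\<in>S. c i * exp (a i \<bullet> x))"

definition Newton :: "('i \<Rightarrow> real^'n) \<Rightarrow> 'i set \<Rightarrow> (real^'n) set" where
  "Newton a S = convex hull (a ` S)"

definition C_NNS :: "('i \<Rightarrow> real^'n) \<Rightarrow> 'i set \<Rightarrow> ('i \<Rightarrow> real) set" where
  "C_NNS a S = {c \<in> extensional S. \<forall>x. Sig a S c x \<ge> 0}"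

definition C_AGE :: "('i \<Rightarrow> real^'n) \<Rightarrow> 'i set \<Rightarrow> 'i \<Rightarrow> ('i \<Rightarrow> real) set" where
  "C_AGE a S k = {c \<in> C_NNS a S. \<forall>i\<in>S. i \<noteq> k \<longrightarrow> c i \<ge> 0}"

definition C_SAGE :: "('i \<Rightarrow> real^'n) \<Rightarrow> 'i set \<Rightarrow> ('i \<Rightarrow> real) set" where
  "C_SAGE a S = {c. \<exists>f. (\<forall>k\<in>S. f k \<in> C_AGE a S k) \<and>
                        c = restrict (\<lambda>i. \<Sum>k\<in>S. f k i) S}"

end

theory Submission
  imports Defs "HOL-Real_Asymp.Real_Asymp"
begin

text \<open>If the columns indexed by \<open>B\<close> are exactly those maximising a linear functional \<open>w\<close>,
  then evaluating at \<open>x + t w\<close> and letting \<open>t \<rightarrow> \<infinity>\<close> kills all other terms of a nonnegative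
  signomial, so the \<open>B\<close>-part of a nonnegative signomial is nonnegative. Faces of the Newton
  polytope are exposed, so every block of the partition is of this kind. Hence nonnegativity
  splits over the blocks, and so do the AGE decompositions: the restriction of an AGE
  certificate for the whole matrix to a block is nonnegative off at most one coordinate, hence
  an AGE certificate for the block, while block certificates extend by zero.\<close>

definition exposed_block :: "('i \<Rightarrow> real^'n) \<Rightarrow> 'i set \<Rightarrow> 'i set \<Rightarrow> bool" where
  "exposed_block a I B \<longleftrightarrow>
     (\<exists>w b. (\<forall>i\<in>I. a i \<bullet> w \<le> b) \<and> (\<forall>i\<in>I. a i \<bullet> w = b \<longleftrightarrow> i \<in> B))"

definition zero_extend :: "'i set \<Rightarrow> 'i set \<Rightarrow> ('i \<Rightarrow> real) \<Rightarrow> 'i \<Rightarrow> real" where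
  "zero_extend I B d = restrict (\<lambda>i. if i \<in> B then d i else 0) I"

lemma Sig_restrict [simp]: "Sig a B (restrict c B) x = Sig a B c x"
  unfolding Sig_def by (rule sum.cong) auto

lemma Sig_zero_extend:
  assumes "finite I" "B \<subseteq> I"
  shows "Sig a I (zero_extend I B d) x = Sig a B d x"
proof -
  have "Sig a I (zero_extend I B d) x = (\<Sum>i\<in>I. if i \<in> B then d i * exp (a i \<bullet> x) else 0)"
    unfolding zero_extend_def Sig_restrict Sig_def by (rule sum.cong) auto
  also have "\<dots> = (\<Sum>i\<in>I \<inter> B. d i * exp (a i \<bullet> x))"
    using assms(1) by (simp add: sum.inter_restrict)
  also have "\<dots> = Sig a B d x"
    using assms(2) by (simp add: Sig_def Int_absorb1)
  finally show ?thesis .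
qed

lemma zero_extend_restrict [simp]: "zero_extend I B (restrict d B) = zero_extend I B d"
  unfolding zero_extend_def by auto

lemma Sig_partition:
  assumes "finite J" "\<And>j. j \<in> J \<Longrightarrow> finite (B j)"
    and "\<And>j j'. j \<in> J \<Longrightarrow> j' \<in> J \<Longrightarrow> j \<noteq> j' \<Longrightarrow> B j \<inter> B j' = {}"
  shows "Sig a (\<Union>j\<in>J. B j) c x = (\<Sum>j\<in>J. Sig a (B j) c x)"
  unfolding Sig_def using assms by (intro sum.UNION_disjoint) auto

lemma sum_zero_extend_partition:
  assumes "c \<in> extensional I" "finite J" "(\<Union>j\<in>J. B j) = I"
    and "\<And>j j'. j \<in> J \<Longrightarrow> j' \<in> J \<Longrightarrow> j \<noteq> j' \<Longrightarrow> B j \<inter> B j' = {}"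
  shows "restrict (\<lambda>i. \<Sum>j\<in>J. zero_extend I (B j) c i) I = c"
proof
  fix i
  show "restrict (\<lambda>i. \<Sum>j\<in>J. zero_extend I (B j) c i) I i = c i"
  proof (cases "i \<in> I")
    case True
    then obtain j0 where j0: "j0 \<in> J" "i \<in> B j0" using assms(3) by blast
    have "zero_extend I (B j) c i = (if j = j0 then c i else 0)" if "j \<in> J" for j
      using assms(4)[OF that j0(1)] j0(2) True by (auto simp: zero_extend_def)
    then have "(\<Sum>j\<in>J. zero_extend I (B j) c i) = (\<Sum>j\<in>J. if j = j0 then c i else 0)"
      by (rule sum.cong[OF refl])
    also have "\<dots> = c i"
      using assms(2) j0(1) by simp
    finally show ?thesis using True by simp
  next
    case False
    then show ?thesis by (simp add: extensional_arb[OF assms(1) False])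
  qed
qed

lemma exposed_block_of_face:
  assumes "finite I" "B \<subseteq> I" "Newton a B face_of Newton a I"
    and own: "\<And>i. i \<in> I \<Longrightarrow> a i \<in> Newton a B \<Longrightarrow> i \<in> B"
  shows "exposed_block a I B"
proof -
  have "polyhedron (Newton a I)"
    unfolding Newton_def using assms(1)
    by (intro polytope_imp_polyhedron) (auto simp: polytope_def)
  then have "Newton a B exposed_face_of Newton a I"
    using assms(3) exposed_face_of_polyhedron by blast
  then obtain w b where le: "Newton a I \<subseteq> {x. w \<bullet> x \<le> b}"
    and eq: "Newton a B = Newton a I \<inter> {x. w \<bullet> x = b}"
    unfolding exposed_face_of_def by blast
  have col: "a i \<in> Newton a S" if "i \<in> S" for i S
    unfolding Newton_def using that by (intro hull_inc) auto
  have "\<forall>i\<in>I. a i \<bullet> w \<le> b"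
    using le col[of _ I] by (fastforce simp: inner_commute)
  moreover have "\<forall>i\<in>I. a i \<bullet> w = b \<longleftrightarrow> i \<in> B"
    using eq col own assms(2) by (fastforce simp: inner_commute)
  ultimately show ?thesis
    unfolding exposed_block_def by blast
qed

lemma restrict_C_NNS_exposed:
  assumes "finite I" "B \<subseteq> I" "exposed_block a I B" "c \<in> C_NNS a I"
  shows "restrict c B \<in> C_NNS a B"
proof -
  obtain w b where le: "\<forall>i\<in>I. a i \<bullet> w \<le> b" and eq: "\<forall>i\<in>I. a i \<bullet> w = b \<longleftrightarrow> i \<in> B"
    using assms(3) unfolding exposed_block_def by blast
  have "Sig a B c x \<ge> 0" for x
  proof -
    define g where "g t = (\<Sum>i\<in>I. c i * exp (a i \<bullet> x) * exp (t * (a i \<bullet> w - b)))" for t :: real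
    have "g t = exp (- (t * b)) * Sig a I c (x + t *\<^sub>R w)" for t
      unfolding g_def Sig_def sum_distrib_left
      by (rule sum.cong) (simp_all add: inner_add_right algebra_simps flip: exp_add)
    then have g_nonneg: "g t \<ge> 0" for t
      using assms(4) unfolding C_NNS_def by auto
    have "(g \<longlongrightarrow> (\<Sum>i\<in>I. c i * exp (a i \<bullet> x) * (if i \<in> B then 1 else 0))) at_top"
      unfolding g_def
    proof (intro tendsto_sum tendsto_mult_left)
      fix i assume i: "i \<in> I"
      show "((\<lambda>t. exp (t * (a i \<bullet> w - b))) \<longlongrightarrow> (if i \<in> B then 1 else 0)) at_top"
      proof (cases "i \<in> B")
        case True
        then have "a i \<bullet> w - b = 0" using eq i by simp
        then show ?thesis using True by simp
      next
        case False
        then have "a i \<bullet> w - b < 0" using eq le i by force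
        then show ?thesis using False by simp real_asymp
      qed
    qed
    then have "0 \<le> (\<Sum>i\<in>I. c i * exp (a i \<bullet> x) * (if i \<in> B then 1 else 0))"
      by (rule tendsto_lowerbound) (auto simp: g_nonneg)
    also have "\<dots> = (\<Sum>i\<in>I \<inter> B. c i * exp (a i \<bullet> x))"
      using assms(1) by (simp add: sum.inter_restrict if_distrib cong: if_cong)
    also have "\<dots> = Sig a B c x"
      using assms(2) by (simp add: Sig_def Int_absorb1)
    finally show ?thesis .
  qed
  then show ?thesis unfolding C_NNS_def by simp
qed

theorem C_NNS_partition:
  assumes "finite I" "finite J" "(\<Union>j\<in>J. B j) = I"
    and "\<And>j j'. j \<in> J \<Longrightarrow> j' \<in> J \<Longrightarrow> j \<noteq> j' \<Longrightarrow> B j \<inter> B j' = {}"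
    and "\<And>j. j \<in> J \<Longrightarrow> exposed_block a I (B j)"
  shows "C_NNS a I = {c \<in> extensional I. \<forall>j\<in>J. restrict c (B j) \<in> C_NNS a (B j)}"
proof (intro equalityI subsetI CollectI conjI ballI)
  fix c j assume "c \<in> C_NNS a I" "j \<in> J"
  then show "restrict c (B j) \<in> C_NNS a (B j)"
    using assms by (intro restrict_C_NNS_exposed) auto
next
  fix c assume "c \<in> C_NNS a I"
  then show "c \<in> extensional I" unfolding C_NNS_def by blast
next
  fix c assume c: "c \<in> {c \<in> extensional I. \<forall>j\<in>J. restrict c (B j) \<in> C_NNS a (B j)}"
  have "Sig a I c x = (\<Sum>j\<in>J. Sig a (B j) c x)" for x
    using assms(1-4) Sig_partition[of J B a c x] by (metis UN_upper finite_subset)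
  moreover have "Sig a (B j) c x \<ge> 0" if "j \<in> J" for j x
    using c that unfolding C_NNS_def by auto
  ultimately show "c \<in> C_NNS a I"
    using c unfolding C_NNS_def by (simp add: sum_nonneg)
qed

lemma C_AGE_add:
  assumes "c \<in> C_AGE a B k" "d \<in> C_AGE a B k"
  shows "restrict (\<lambda>i. c i + d i) B \<in> C_AGE a B k"
proof -
  have "Sig a B (restrict (\<lambda>i. c i + d i) B) x = Sig a B c x + Sig a B d x" for x
    unfolding Sig_restrict Sig_def by (simp add: sum.distrib distrib_right)
  then show ?thesis
    using assms unfolding C_AGE_def C_NNS_def by (simp add: add_nonneg_nonneg)
qed

lemma C_AGE_zero: "restrict (\<lambda>_. 0) B \<in> C_AGE a B k"
  unfolding C_AGE_def C_NNS_def by (simp add: Sig_def)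

lemma C_SAGE_add:
  assumes "c \<in> C_SAGE a B" "d \<in> C_SAGE a B"
  shows "restrict (\<lambda>i. c i + d i) B \<in> C_SAGE a B"
proof -
  obtain f where f: "\<forall>k\<in>B. f k \<in> C_AGE a B k" "c = restrict (\<lambda>i. \<Sum>k\<in>B. f k i) B"
    using assms(1) unfolding C_SAGE_def by blast
  obtain g where g: "\<forall>k\<in>B. g k \<in> C_AGE a B k" "d = restrict (\<lambda>i. \<Sum>k\<in>B. g k i) B"
    using assms(2) unfolding C_SAGE_def by blast
  define h where "h k = restrict (\<lambda>i. f k i + g k i) B" for k
  have "\<forall>k\<in>B. h k \<in> C_AGE a B k"
    using f(1) g(1) by (simp add: h_def C_AGE_add)
  moreover have "restrict (\<lambda>i. c i + d i) B = restrict (\<lambda>i. \<Sum>k\<in>B. h k i) B"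
    unfolding f(2) g(2) h_def by (auto simp: sum.distrib)
  ultimately show ?thesis
    unfolding C_SAGE_def by blast
qed

lemma C_SAGE_zero: "restrict (\<lambda>_. 0) B \<in> C_SAGE a B"
  unfolding C_SAGE_def
  by (intro CollectI exI[of _ "\<lambda>_. restrict (\<lambda>_. 0) B"]) (auto simp: C_AGE_zero)

lemma C_SAGE_sum:
  assumes "finite K" "\<And>k. k \<in> K \<Longrightarrow> h k \<in> C_SAGE a B"
  shows "restrict (\<lambda>i. \<Sum>k\<in>K. h k i) B \<in> C_SAGE a B"
  using assms
proof (induction K rule: finite_induct)
  case empty
  then show ?case using C_SAGE_zero[of B a] by (simp only: sum.empty)
next
  case (insert k K)
  then have "restrict (\<lambda>i. h k i + restrict (\<lambda>i. \<Sum>k\<in>K. h k i) B i) B \<in> C_SAGE a B"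
    by (intro C_SAGE_add) auto
  also have "restrict (\<lambda>i. h k i + restrict (\<lambda>i. \<Sum>k\<in>K. h k i) B i) B
      = restrict (\<lambda>i. \<Sum>k\<in>insert k K. h k i) B"
    using insert by auto
  finally show ?case .
qed

lemma C_AGE_subset_C_SAGE:
  assumes "finite B" "k \<in> B"
  shows "C_AGE a B k \<subseteq> C_SAGE a B"
proof
  fix c assume c: "c \<in> C_AGE a B k"
  define f where "f k' = (if k' = k then c else restrict (\<lambda>_. 0) B)" for k'
  have "\<forall>k'\<in>B. f k' \<in> C_AGE a B k'"
    using c by (auto simp: f_def intro: C_AGE_zero)
  moreover have "c = restrict (\<lambda>i. \<Sum>k'\<in>B. f k' i) B"
  proof
    fix i
    show "c i = restrict (\<lambda>i. \<Sum>k'\<in>B. f k' i) B i"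
    proof (cases "i \<in> B")
      case True
      then have "(\<Sum>k'\<in>B. f k' i) = (\<Sum>k'\<in>B. if k' = k then c i else 0)"
        by (intro sum.cong) (auto simp: f_def)
      then show ?thesis using True assms by simp
    next
      case False
      have "c \<in> extensional B" using c unfolding C_AGE_def C_NNS_def by auto
      then show ?thesis using False by (simp add: extensional_arb[OF _ False])
    qed
  qed
  ultimately show "c \<in> C_SAGE a B"
    unfolding C_SAGE_def by blast
qed

lemma C_SAGE_if_nonneg_off:
  assumes "finite B" "d \<in> C_NNS a B" "\<forall>i\<in>B. i \<noteq> k \<longrightarrow> d i \<ge> 0"
  shows "d \<in> C_SAGE a B"
proof (cases "B = {}")
  case True
  then show ?thesis using assms(2) unfolding C_SAGE_def C_NNS_def by auto
next
  case False
  then obtain k' where k': "k' \<in> B" "k \<in> B \<longrightarrow> k' = k" by blast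
  then have "d \<in> C_AGE a B k'"
    using assms(2,3) unfolding C_AGE_def by auto
  then show ?thesis using C_AGE_subset_C_SAGE[OF assms(1) k'(1)] by blast
qed

lemma zero_extend_C_AGE:
  assumes "finite I" "B \<subseteq> I" "d \<in> C_AGE a B k"
  shows "zero_extend I B d \<in> C_AGE a I k"
  using assms unfolding C_AGE_def C_NNS_def
  by (auto simp: Sig_zero_extend) (auto simp: zero_extend_def)

lemma zero_extend_C_SAGE:
  assumes "finite I" "B \<subseteq> I" "d \<in> C_SAGE a B"
  shows "zero_extend I B d \<in> C_SAGE a I"
proof -
  obtain f where f: "\<forall>k\<in>B. f k \<in> C_AGE a B k" "d = restrict (\<lambda>i. \<Sum>k\<in>B. f k i) B"
    using assms(3) unfolding C_SAGE_def by blast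
  have fin: "finite B" using assms(1,2) finite_subset by blast
  have "zero_extend I B (f k) \<in> C_SAGE a I" if "k \<in> B" for k
    using zero_extend_C_AGE[OF assms(1,2)] C_AGE_subset_C_SAGE[OF assms(1)] f(1) that assms(2)
    by blast
  then have "restrict (\<lambda>i. \<Sum>k\<in>B. zero_extend I B (f k) i) I \<in> C_SAGE a I"
    using fin by (rule C_SAGE_sum[rotated])
  moreover have "restrict (\<lambda>i. \<Sum>k\<in>B. zero_extend I B (f k) i) I = zero_extend I B d"
    unfolding f(2) zero_extend_def by auto
  ultimately show ?thesis by simp
qed

lemma restrict_C_SAGE_exposed:
  assumes "finite I" "B \<subseteq> I" "exposed_block a I B" "c \<in> C_SAGE a I"
  shows "restrict c B \<in> C_SAGE a B"
proof -
  obtain f where f: "\<forall>k\<in>I. f k \<in> C_AGE a I k" and c_eq: "c = restrict (\<lambda>i. \<Sum>k\<in>I. f k i) I"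
    using assms(4) unfolding C_SAGE_def by blast
  have "restrict (f k) B \<in> C_SAGE a B" if "k \<in> I" for k
  proof (rule C_SAGE_if_nonneg_off)
    show "finite B" using assms(1,2) finite_subset by blast
    show "restrict (f k) B \<in> C_NNS a B"
      using f that unfolding C_AGE_def by (intro restrict_C_NNS_exposed[OF assms(1-3)]) auto
    show "\<forall>i\<in>B. i \<noteq> k \<longrightarrow> restrict (f k) B i \<ge> 0"
      using f that assms(2) unfolding C_AGE_def by auto
  qed
  then have "restrict (\<lambda>i. \<Sum>k\<in>I. restrict (f k) B i) B \<in> C_SAGE a B"
    using assms(1) by (rule C_SAGE_sum[rotated])
  moreover have "restrict (\<lambda>i. \<Sum>k\<in>I. restrict (f k) B i) B = restrict c B"
    unfolding c_eq using assms(2) by (intro restrict_ext) auto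
  ultimately show ?thesis by simp
qed

theorem C_SAGE_partition:
  assumes "finite I" "finite J" "(\<Union>j\<in>J. B j) = I"
    and "\<And>j j'. j \<in> J \<Longrightarrow> j' \<in> J \<Longrightarrow> j \<noteq> j' \<Longrightarrow> B j \<inter> B j' = {}"
    and "\<And>j. j \<in> J \<Longrightarrow> exposed_block a I (B j)"
  shows "C_SAGE a I = {c \<in> extensional I. \<forall>j\<in>J. restrict c (B j) \<in> C_SAGE a (B j)}"
proof (intro equalityI subsetI CollectI conjI ballI)
  fix c j assume "c \<in> C_SAGE a I" "j \<in> J"
  then show "restrict c (B j) \<in> C_SAGE a (B j)"
    using assms by (intro restrict_C_SAGE_exposed) auto
next
  fix c assume "c \<in> C_SAGE a I"
  then show "c \<in> extensional I" unfolding C_SAGE_def by auto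
next
  fix c assume c: "c \<in> {c \<in> extensional I. \<forall>j\<in>J. restrict c (B j) \<in> C_SAGE a (B j)}"
  have "zero_extend I (B j) (restrict c (B j)) \<in> C_SAGE a I" if "j \<in> J" for j
    using zero_extend_C_SAGE[OF assms(1)] c that assms(3) by blast
  then have "zero_extend I (B j) c \<in> C_SAGE a I" if "j \<in> J" for j
    using that by simp
  then have "restrict (\<lambda>i. \<Sum>j\<in>J. zero_extend I (B j) c i) I \<in> C_SAGE a I"
    using assms(2) by (rule C_SAGE_sum[rotated])
  also have "restrict (\<lambda>i. \<Sum>j\<in>J. zero_extend I (B j) c i) I = c"
    using c assms(2-4) by (intro sum_zero_extend_partition) auto
  finally show "c \<in> C_SAGE a I" .
qed

theorem mainTheorem9:
  fixes a :: "'i \<Rightarrow> real^'n" and I :: "'i set"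
    and J :: "'k set" and B :: "'k \<Rightarrow> 'i set"
  assumes "finite I" and "inj_on a I"
    and "finite J"
    and "(\<Union>j\<in>J. B j) = I"
    and "\<And>j j'. j \<in> J \<Longrightarrow> j' \<in> J \<Longrightarrow> j \<noteq> j' \<Longrightarrow> B j \<inter> B j' = {}"
    and "\<And>j. j \<in> J \<Longrightarrow> Newton a (B j) face_of Newton a I"
    and "\<And>j j'. j \<in> J \<Longrightarrow> j' \<in> J \<Longrightarrow> j \<noteq> j' \<Longrightarrow>
           Newton a (B j) \<inter> Newton a (B j') = {}"
  shows "C_NNS a I = {c \<in> extensional I. \<forall>j\<in>J. restrict c (B j) \<in> C_NNS a (B j)}
       \<and> C_SAGE a I = {c \<in> extensional I. \<forall>j\<in>J. restrict c (B j) \<in> C_SAGE a (B j)}"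
proof -
  have "exposed_block a I (B j)" if j: "j \<in> J" for j
  proof (rule exposed_block_of_face)
    show "B j \<subseteq> I" using assms(4) j by blast
    fix i assume "i \<in> I" "a i \<in> Newton a (B j)"
    moreover obtain j' where "j' \<in> J" "i \<in> B j'" using \<open>i \<in> I\<close> assms(4) by blast
    moreover have "a i \<in> Newton a (B j')"
      unfolding Newton_def using \<open>i \<in> B j'\<close> by (intro hull_inc) auto
    ultimately show "i \<in> B j" using assms(7)[OF j] by blast
  qed (use assms(1,6) j in auto)
  then show ?thesis
    using C_NNS_partition[OF assms(1,3-5)] C_SAGE_partition[OF assms(1,3-5)] by blast
qed

end
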